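(* In $FVB_3$, the elements $$h_0=\big[t_{1,2},[t_{2,3},t_{1,3}]\big],\qquad h_1=\big[t_{1,2},[d_{1,2,3},t_{1,3}]\big]$$ generate a subgroup isomorphic to the free group of rank $2$.
   Context: $FVB_3$ is the group with generators $\sigma_1,\sigma_2,\rho_1,\rho_2$ and defining relations $\sigma_i^2=\rho_i^2=1$ ($i=1,2$), $\sigma_1\sigma_2\sigma_1=\sigma_2\sigma_1\sigma_2$, $\rho_1\rho_2\rho_1=\rho_2\rho_1\rho_2$, $\rho_1\rho_2\sigma_1=\sigma_2\rho_1\rho_2$. Define $\lambda_{1,2}=\rho_1\sigma_1$, $\lambda_{2,3}=\rho_2\sigma_2$, $\lambda_{1,3}=\rho_2\lambda_{1,2}\rho_2$; $t_{i,j}=\lambda_{i,j}^2$ and $d_{1,2,3}=\lambda_{2,3}^{-1}\lambda_{1,2}^{-1}\lambda_{2,3}\lambda_{1,3}$. Commutators are $[g,h]=ghg^{-1}h^{-1}$. *)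

theory Defs
  imports "HOL-Algebra.Algebra"
begin

text \<open>A word over generators of type 'g: a list of letters (g, True) = g, (g, False) = g^-1.\<close>
type_synonym 'g word = "('g \<times> bool) list"

definition word_inv :: "'g word \<Rightarrow> 'g word" where
  "word_inv w = rev (map (\<lambda>(g, b). (g, \<not> b)) w)"

definition words_over :: "'g set \<Rightarrow> 'g word set" where
  "words_over S = {w. fst ` set w \<subseteq> S}"

inductive_set pres_rel :: "'g set \<Rightarrow> 'g word set \<Rightarrow> ('g word \<times> 'g word) set"
  for S :: "'g set" and R :: "'g word set" where
  refl: "w \<in> words_over S \<Longrightarrow> (w, w) \<in> pres_rel S R"
| sym: "(u, v) \<in> pres_rel S R \<Longrightarrow> (v, u) \<in> pres_rel S R"
| trans: "(u, v) \<in> pres_rel S R \<Longrightarrow> (v, w) \<in> pres_rel S R \<Longrightarrow> (u, w) \<in> pres_rel S R"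
| cancel: "u \<in> words_over S \<Longrightarrow> v \<in> words_over S \<Longrightarrow> a \<in> S \<Longrightarrow>
           (u @ [(a, b), (a, \<not> b)] @ v, u @ v) \<in> pres_rel S R"
| relator: "r \<in> R \<Longrightarrow> r \<in> words_over S \<Longrightarrow> u \<in> words_over S \<Longrightarrow> v \<in> words_over S \<Longrightarrow>
           (u @ r @ v, u @ v) \<in> pres_rel S R"

definition pres_mult :: "'g set \<Rightarrow> 'g word set \<Rightarrow> 'g word set \<Rightarrow> 'g word set \<Rightarrow> 'g word set" where
  "pres_mult gs rs A B = pres_rel gs rs `` {w. \<exists>x\<in>A. \<exists>y\<in>B. w = x @ y}"

definition presented_group :: "'g set \<Rightarrow> 'g word set \<Rightarrow> ('g word set) monoid" where
  "presented_group S R =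
     \<lparr> carrier = (\<lambda>w. pres_rel S R `` {w}) ` words_over S,
       monoid.mult = pres_mult S R,
       monoid.one = pres_rel S R `` {[]} \<rparr>"

definition pres_gen :: "'g set \<Rightarrow> 'g word set \<Rightarrow> 'g \<Rightarrow> 'g word set" where
  "pres_gen S R a = pres_rel S R `` {[(a, True)]}"

definition free_group2 :: "(nat word set) monoid" where
  "free_group2 = presented_group {0, 1} {}"

text \<open>Generators: 0 = sigma_1, 1 = sigma_2, 2 = rho_1, 3 = rho_2.
  A relation a = b is encoded by the relator a b^-1.\<close>
definition FVB3_gens :: "nat set" where "FVB3_gens = {0, 1, 2, 3}"

definition FVB3_rels :: "nat word set" where
  "FVB3_rels =
    { [(0, True), (0, True)],
      [(1, True), (1, True)],
      [(2, True), (2, True)],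
      [(3, True), (3, True)],
      [(0, True), (1, True), (0, True)] @ word_inv [(1, True), (0, True), (1, True)],
      [(2, True), (3, True), (2, True)] @ word_inv [(3, True), (2, True), (3, True)],
      [(2, True), (3, True), (0, True)] @ word_inv [(1, True), (2, True), (3, True)] }"

definition FVB3 :: "(nat word set) monoid" where
  "FVB3 = presented_group FVB3_gens FVB3_rels"

definition sigma1 where "sigma1 = pres_gen FVB3_gens FVB3_rels 0"
definition sigma2 where "sigma2 = pres_gen FVB3_gens FVB3_rels 1"
definition rho1 where "rho1 = pres_gen FVB3_gens FVB3_rels 2"
definition rho2 where "rho2 = pres_gen FVB3_gens FVB3_rels 3"

definition lambda12 where "lambda12 = rho1 \<otimes>\<^bsub>FVB3\<^esub> sigma1"
definition lambda23 where "lambda23 = rho2 \<otimes>\<^bsub>FVB3\<^esub> sigma2"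
definition lambda13 where "lambda13 = rho2 \<otimes>\<^bsub>FVB3\<^esub> lambda12 \<otimes>\<^bsub>FVB3\<^esub> rho2"

definition t12 where "t12 = lambda12 \<otimes>\<^bsub>FVB3\<^esub> lambda12"
definition t23 where "t23 = lambda23 \<otimes>\<^bsub>FVB3\<^esub> lambda23"
definition t13 where "t13 = lambda13 \<otimes>\<^bsub>FVB3\<^esub> lambda13"

definition d123 where
  "d123 = inv\<^bsub>FVB3\<^esub> lambda23 \<otimes>\<^bsub>FVB3\<^esub> inv\<^bsub>FVB3\<^esub> lambda12
          \<otimes>\<^bsub>FVB3\<^esub> lambda23 \<otimes>\<^bsub>FVB3\<^esub> lambda13"

definition comm :: "('a, 'b) monoid_scheme \<Rightarrow> 'a \<Rightarrow> 'a \<Rightarrow> 'a" where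
  "comm G g h = g \<otimes>\<^bsub>G\<^esub> h \<otimes>\<^bsub>G\<^esub> inv\<^bsub>G\<^esub> g \<otimes>\<^bsub>G\<^esub> inv\<^bsub>G\<^esub> h"

definition h0 where "h0 = comm FVB3 t12 (comm FVB3 t23 t13)"
definition h1 where "h1 = comm FVB3 t12 (comm FVB3 d123 t13)"

end

theory Submission
  imports Defs
begin

text \<open>Map \<open>FVB\<^sub>3\<close> into the wreath product \<open>F\<^sub>2 \<wr> S\<^sub>3\<close>, realised as an action on reduced words of the
  free group \<open>F\<^sub>2\<close> on \<open>{0, 1}\<close> times six points: \<open>\<sigma>\<^sub>i\<close> and \<open>\<rho>\<^sub>i\<close> permute the points in the same way, and
  \<open>\<sigma>\<^sub>i\<close> in addition multiplies the \<open>F\<^sub>2\<close>-coordinate by a letter depending on the point; all relators act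
  trivially. The elements \<open>h\<^sub>0\<close> and \<open>h\<^sub>1\<close> fix the point \<open>0\<close> and act there on \<open>F\<^sub>2\<close> by left
  multiplication with explicit reduced words of lengths 20 and 14. These play ping-pong: each of
  \<open>h\<^sub>0\<^sup>\<plusminus>\<^sup>1, h\<^sub>1\<^sup>\<plusminus>\<^sup>1\<close> has a prefix such that applying it to a reduced word that starts with the prefix of any
  letter other than its inverse yields a word starting with its own prefix. So no nontrivial reduced
  word in \<open>h\<^sub>0, h\<^sub>1\<close> acts trivially, and the homomorphism \<open>F\<^sub>2 \<rightarrow> \<langle>h\<^sub>0, h\<^sub>1\<rangle>\<close> is injective.\<close>

lemma words_over_append [simp]:
  "u @ v \<in> words_over S \<longleftrightarrow> u \<in> words_over S \<and> v \<in> words_over S"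
  by (auto simp: words_over_def)

lemma words_over_Cons [simp]:
  "x # v \<in> words_over S \<longleftrightarrow> fst x \<in> S \<and> v \<in> words_over S"
  by (auto simp: words_over_def)

lemma words_over_Nil [simp]: "[] \<in> words_over S"
  by (auto simp: words_over_def)

lemma word_inv_Nil [simp]: "word_inv [] = []"
  by (simp add: word_inv_def)

lemma word_inv_Cons [simp]: "word_inv (x # w) = word_inv w @ [(fst x, \<not> snd x)]"
  by (cases x) (simp add: word_inv_def)

lemma word_inv_append [simp]: "word_inv (u @ v) = word_inv v @ word_inv u"
  by (simp add: word_inv_def)

lemma word_inv_word_inv [simp]: "word_inv (word_inv w) = w"
  by (induction w) auto

lemma word_inv_words_over [simp]: "word_inv w \<in> words_over S \<longleftrightarrow> w \<in> words_over S"
  by (induction w) auto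

lemma pres_rel_words_over:
  assumes "(u, v) \<in> pres_rel S R"
  shows "u \<in> words_over S" "v \<in> words_over S"
  using assms by induction auto

lemma pres_rel_context:
  assumes "(u, v) \<in> pres_rel S R" "p \<in> words_over S" "q \<in> words_over S"
  shows "(p @ u @ q, p @ v @ q) \<in> pres_rel S R"
  using assms
proof (induction arbitrary: p q)
  case (refl w)
  then show ?case by (auto intro: pres_rel.refl)
next
  case (sym u v)
  then show ?case by (auto intro: pres_rel.sym)
next
  case (trans u v w)
  then show ?case by (blast intro: pres_rel.trans)
next
  case (cancel u v a b)
  have "((p @ u) @ [(a, b), (a, \<not> b)] @ (v @ q), (p @ u) @ (v @ q)) \<in> pres_rel S R"
    using cancel by (intro pres_rel.cancel) auto
  then show ?case by simp
next
  case (relator r u v)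
  have "((p @ u) @ r @ (v @ q), (p @ u) @ (v @ q)) \<in> pres_rel S R"
    using relator by (intro pres_rel.relator) auto
  then show ?case by simp
qed

lemma pres_rel_append:
  assumes "(u, u') \<in> pres_rel S R" "(v, v') \<in> pres_rel S R"
  shows "(u @ v, u' @ v') \<in> pres_rel S R"
proof -
  have "([] @ u @ v, [] @ u' @ v) \<in> pres_rel S R"
    using assms pres_rel_words_over by (intro pres_rel_context) auto
  moreover have "(u' @ v @ [], u' @ v' @ []) \<in> pres_rel S R"
    using assms pres_rel_words_over by (intro pres_rel_context) auto
  ultimately show ?thesis by (auto intro: pres_rel.trans)
qed

lemma pres_rel_word_inv_append:
  assumes "w \<in> words_over S"
  shows "(word_inv w @ w, []) \<in> pres_rel S R"
  using assms
proof (induction w)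
  case Nil
  then show ?case by (auto intro: pres_rel.refl)
next
  case (Cons x w)
  obtain a b where x: "x = (a, b)" by (cases x)
  have "(word_inv w @ [(a, \<not> b), (a, \<not> \<not> b)] @ w, word_inv w @ w) \<in> pres_rel S R"
    using Cons x by (intro pres_rel.cancel) auto
  then show ?case using Cons x by (auto intro: pres_rel.trans)
qed

lemma pres_rel_append_word_inv:
  assumes "w \<in> words_over S"
  shows "(w @ word_inv w, []) \<in> pres_rel S R"
  using pres_rel_word_inv_append[of "word_inv w" S R] assms by simp

abbreviation pres_class :: "'g set \<Rightarrow> 'g word set \<Rightarrow> 'g word \<Rightarrow> 'g word set" where
  "pres_class S R w \<equiv> pres_rel S R `` {w}"

lemma pres_class_eq_iff:
  assumes "u \<in> words_over S"
  shows "pres_class S R u = pres_class S R v \<longleftrightarrow> (u, v) \<in> pres_rel S R"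
proof
  assume "pres_class S R u = pres_class S R v"
  moreover have "u \<in> pres_class S R u" using assms by (auto intro: pres_rel.refl)
  ultimately show "(u, v) \<in> pres_rel S R" by (auto intro: pres_rel.sym)
next
  assume "(u, v) \<in> pres_rel S R"
  then show "pres_class S R u = pres_class S R v"
    by (auto intro: pres_rel.sym pres_rel.trans)
qed

lemma pres_mult_pres_class:
  assumes "u \<in> words_over S" "v \<in> words_over S"
  shows "pres_mult S R (pres_class S R u) (pres_class S R v) = pres_class S R (u @ v)"
proof
  show "pres_mult S R (pres_class S R u) (pres_class S R v) \<subseteq> pres_class S R (u @ v)"
    by (auto simp: pres_mult_def dest: pres_rel_append intro: pres_rel.trans)
  show "pres_class S R (u @ v) \<subseteq> pres_mult S R (pres_class S R u) (pres_class S R v)"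
    using assms by (auto simp: pres_mult_def intro: pres_rel.refl)
qed

lemma presented_group_carrier:
  "carrier (presented_group S R) = pres_class S R ` words_over S"
  by (simp add: presented_group_def)

lemma presented_group_mult:
  assumes "u \<in> words_over S" "v \<in> words_over S"
  shows "pres_class S R u \<otimes>\<^bsub>presented_group S R\<^esub> pres_class S R v = pres_class S R (u @ v)"
  using assms by (simp add: presented_group_def pres_mult_pres_class)

lemma presented_group_one: "\<one>\<^bsub>presented_group S R\<^esub> = pres_class S R []"
  by (simp add: presented_group_def)

lemma group_presented_group: "group (presented_group S R)"
proof (rule groupI)
  fix x
  assume "x \<in> carrier (presented_group S R)"
  then obtain w where w: "w \<in> words_over S" "x = pres_class S R w"
    by (auto simp: presented_group_carrier)
  have "pres_class S R (word_inv w) \<otimes>\<^bsub>presented_group S R\<^esub> x = \<one>\<^bsub>presented_group S R\<^esub>"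
    using w pres_rel_word_inv_append[OF w(1)]
    by (simp add: presented_group_mult presented_group_one pres_class_eq_iff)
  moreover have "pres_class S R (word_inv w) \<in> carrier (presented_group S R)"
    using w by (auto simp: presented_group_carrier)
  ultimately show "\<exists>y\<in>carrier (presented_group S R).
      y \<otimes>\<^bsub>presented_group S R\<^esub> x = \<one>\<^bsub>presented_group S R\<^esub>"
    by blast
qed (auto simp: presented_group_carrier presented_group_mult presented_group_one)

lemma presented_group_inv:
  assumes "w \<in> words_over S"
  shows "inv\<^bsub>presented_group S R\<^esub> pres_class S R w = pres_class S R (word_inv w)"
proof (rule group.inv_equality[OF group_presented_group])
  show "pres_class S R (word_inv w) \<otimes>\<^bsub>presented_group S R\<^esub> pres_class S R w
      = \<one>\<^bsub>presented_group S R\<^esub>"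
    using assms pres_rel_word_inv_append[OF assms]
    by (simp add: presented_group_mult presented_group_one pres_class_eq_iff)
qed (use assms in \<open>auto simp: presented_group_carrier\<close>)

lemma presented_group_generate:
  "carrier (presented_group S R) = generate (presented_group S R) (pres_gen S R ` S)"
proof
  interpret group "presented_group S R" by (rule group_presented_group)
  show "generate (presented_group S R) (pres_gen S R ` S) \<subseteq> carrier (presented_group S R)"
  proof (rule subsetI, rule generate_in_carrier)
    show "pres_gen S R ` S \<subseteq> carrier (presented_group S R)"
      by (auto simp: pres_gen_def presented_group_carrier)
  qed
  have "pres_class S R w \<in> generate (presented_group S R) (pres_gen S R ` S)"
    if "w \<in> words_over S" for w
    using that
  proof (induction w)
    case Nil
    then show ?case using generate.one by (simp add: presented_group_one[symmetric])
  next
    case (Cons x w)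
    obtain a b where x: "x = (a, b)" by (cases x)
    have gen: "pres_gen S R a \<in> generate (presented_group S R) (pres_gen S R ` S)"
      using Cons.prems x by (auto intro: generate.incl)
    have "pres_class S R [(a, b)] \<in> generate (presented_group S R) (pres_gen S R ` S)"
    proof (cases b)
      case False
      have "pres_class S R [(a, b)] = inv\<^bsub>presented_group S R\<^esub> pres_gen S R a"
        using Cons.prems x False by (simp add: pres_gen_def presented_group_inv)
      then show ?thesis using Cons.prems x by (auto intro: generate.inv)
    qed (use gen in \<open>simp add: pres_gen_def\<close>)
    moreover have "pres_class S R (x # w)
        = pres_class S R [(a, b)] \<otimes>\<^bsub>presented_group S R\<^esub> pres_class S R w"
      using Cons.prems x by (simp add: presented_group_mult)
    ultimately show ?case using Cons by (auto intro: generate.eng)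
  qed
  then show "carrier (presented_group S R) \<subseteq> generate (presented_group S R) (pres_gen S R ` S)"
    by (auto simp: presented_group_carrier)
qed

section \<open>Free reduction\<close>

text \<open>Left multiplication of reduced words by letters and by words (van der Waerden's trick):
  the free group acts on reduced words, which gives normal forms without a confluence argument.\<close>

definition mult_letter :: "'a \<times> bool \<Rightarrow> ('a \<times> bool) list \<Rightarrow> ('a \<times> bool) list" where
  "mult_letter x r =
     (case r of [] \<Rightarrow> [x] | y # r' \<Rightarrow> if y = (fst x, \<not> snd x) then r' else x # r)"

definition mult_word :: "('a \<times> bool) list \<Rightarrow> ('a \<times> bool) list \<Rightarrow> ('a \<times> bool) list" where
  "mult_word w r = foldr mult_letter w r"

fun reduced :: "('a \<times> bool) list \<Rightarrow> bool" where
  "reduced [] = True"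
| "reduced [x] = True"
| "reduced (x # y # r) = (y \<noteq> (fst x, \<not> snd x) \<and> reduced (y # r))"

lemma mult_letter_Nil: "mult_letter x [] = [x]"
  by (simp add: mult_letter_def)

lemma mult_letter_Cons:
  "mult_letter x (y # r) = (if y = (fst x, \<not> snd x) then r else x # y # r)"
  by (simp add: mult_letter_def)

lemma mult_word_Nil [simp]: "mult_word [] r = r"
  by (simp add: mult_word_def)

lemma mult_word_Cons [simp]: "mult_word (x # w) r = mult_letter x (mult_word w r)"
  by (simp add: mult_word_def)

lemma mult_word_append: "mult_word (u @ v) r = mult_word u (mult_word v r)"
  by (simp add: mult_word_def)

lemma reduced_Cons_tl: "reduced (x # r) \<Longrightarrow> reduced r"
  by (cases r) auto

lemma reduced_append_right: "reduced (p @ r) \<Longrightarrow> reduced r"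
  by (induction p) (auto dest: reduced_Cons_tl)

lemma reduced_mult_letter: "reduced r \<Longrightarrow> reduced (mult_letter x r)"
  by (cases r) (auto simp: mult_letter_def reduced_Cons_tl)

lemma reduced_mult_word: "reduced r \<Longrightarrow> reduced (mult_word w r)"
  by (induction w) (auto simp: reduced_mult_letter)

lemma mult_letter_inverse:
  assumes "reduced r"
  shows "mult_letter (fst x, \<not> snd x) (mult_letter x r) = r"
proof (cases r)
  case (Cons y r')
  then show ?thesis
    using assms by (cases "y = (fst x, \<not> snd x)"; cases r') (auto simp: mult_letter_def prod_eq_iff)
qed (simp add: mult_letter_def)

lemma mult_word_mult_letter:
  assumes "reduced q" "reduced r"
  shows "mult_word (mult_letter x q) r = mult_letter x (mult_word q r)"
proof (cases q)
  case (Cons y q')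
  show ?thesis
  proof (cases "y = (fst x, \<not> snd x)")
    case True
    have "mult_letter x (mult_word q r) = mult_letter x (mult_letter (fst x, \<not> snd x) (mult_word q' r))"
      using Cons True by simp
    also have "\<dots> = mult_word q' r"
      using mult_letter_inverse[of "mult_word q' r" "(fst x, \<not> snd x)"] reduced_mult_word[OF assms(2)]
      by simp
    finally show ?thesis using Cons True by (simp add: mult_letter_def)
  qed (use Cons in \<open>simp add: mult_letter_def\<close>)
qed (simp add: mult_letter_def)

lemma mult_word_eq_mult_reduced: "reduced r \<Longrightarrow> mult_word w r = mult_word (mult_word w []) r"
  by (induction w) (simp_all add: mult_word_mult_letter reduced_mult_word)

lemma mult_word_trivial: "mult_word w [] = [] \<Longrightarrow> reduced r \<Longrightarrow> mult_word w r = r"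
  using mult_word_eq_mult_reduced[of r w] by simp

lemma mult_word_reduced_append: "reduced (p @ r) \<Longrightarrow> mult_word p r = p @ r"
proof (induction p)
  case (Cons x p)
  then have "mult_word p r = p @ r" using reduced_Cons_tl[of x "p @ r"] by simp
  then show ?case using Cons.prems by (cases "p @ r") (auto simp: mult_letter_def)
qed simp

lemma reduced_last_Cons: "reduced (p @ r) \<Longrightarrow> p \<noteq> [] \<Longrightarrow> reduced (last p # r)"
proof (induction p)
  case (Cons x p)
  then show ?case by (cases p) (auto dest: reduced_Cons_tl)
qed simp

lemma reduced_append_last:
  "reduced q \<Longrightarrow> q \<noteq> [] \<Longrightarrow> reduced (last q # r) \<Longrightarrow> reduced (q @ r)"
  by (induction q rule: reduced.induct) simp_all

lemma set_mult_word: "set (mult_word w r) \<subseteq> set w \<union> set r"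
proof (induction w)
  case (Cons x w)
  have "set (mult_letter x q) \<subseteq> insert x (set q)" for q
    by (cases q) (auto simp: mult_letter_def)
  then show ?case using Cons by fastforce
qed simp

lemma mult_word_prefix:
  assumes "p \<noteq> []" "reduced (p @ r)"
    and "mult_word (V @ p) [] \<noteq> []"
    and "take (length p') (mult_word (V @ p) []) = p'"
    and "last (mult_word (V @ p) []) = last p"
  shows "\<exists>r'. mult_word V (p @ r) = p' @ r'"
proof -
  define q where "q = mult_word (V @ p) []"
  have "reduced (q @ r)"
  proof (rule reduced_append_last)
    show "reduced q" unfolding q_def by (rule reduced_mult_word) simp
    show "reduced (last q # r)" using reduced_last_Cons[OF assms(2,1)] assms(5) q_def by simp
  qed (use assms(3) q_def in simp)
  have "mult_word V (p @ r) = mult_word (V @ p) r"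
    using mult_word_reduced_append[OF assms(2)] by (simp add: mult_word_append)
  also have "\<dots> = mult_word q r"
    using mult_word_eq_mult_reduced[OF reduced_append_right[OF assms(2)]] q_def by simp
  also have "\<dots> = q @ r"
    using \<open>reduced (q @ r)\<close> by (rule mult_word_reduced_append)
  also have "\<dots> = p' @ (drop (length p') q @ r)"
    using assms(4) q_def by (metis append_assoc append_take_drop_id)
  finally show ?thesis by blast
qed

lemma pres_rel_mult_letter:
  assumes "fst x \<in> S" "q \<in> words_over S"
  shows "(x # q, mult_letter x q) \<in> pres_rel S R"
proof (cases q)
  case (Cons y q')
  show ?thesis
  proof (cases "y = (fst x, \<not> snd x)")
    case True
    have "([] @ [(fst x, snd x), (fst x, \<not> snd x)] @ q', [] @ q') \<in> pres_rel S R"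
      using assms Cons by (intro pres_rel.cancel) auto
    then show ?thesis using Cons True by (simp add: mult_letter_Cons)
  qed (use Cons assms in \<open>auto simp: mult_letter_Cons intro: pres_rel.refl\<close>)
qed (use assms in \<open>auto simp: mult_letter_Nil intro: pres_rel.refl\<close>)

lemma pres_rel_mult_word: "w \<in> words_over S \<Longrightarrow> (w, mult_word w []) \<in> pres_rel S R"
proof (induction w)
  case Nil
  then show ?case by (auto intro: pres_rel.refl)
next
  case (Cons x w)
  have mult_w: "mult_word w [] \<in> words_over S"
    using set_mult_word[of w "[]"] Cons.prems by (auto simp: words_over_def)
  have "([x] @ w @ [], [x] @ mult_word w [] @ []) \<in> pres_rel S R"
    using Cons by (intro pres_rel_context) auto
  moreover have "(x # mult_word w [], mult_letter x (mult_word w [])) \<in> pres_rel S R"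
    using Cons.prems mult_w by (intro pres_rel_mult_letter) auto
  ultimately show ?case by (auto intro: pres_rel.trans)
qed

section \<open>Maps out of presented groups\<close>

lemma pres_rel_act_eq:
  fixes act :: "'g word \<Rightarrow> 's \<Rightarrow> 's"
  assumes act_append: "\<And>u v s. act (u @ v) s = act u (act v s)"
    and act_closed: "\<And>w s. w \<in> words_over S \<Longrightarrow> s \<in> U \<Longrightarrow> act w s \<in> U"
    and act_cancel: "\<And>a b s. a \<in> S \<Longrightarrow> s \<in> U \<Longrightarrow> act [(a, b), (a, \<not> b)] s = s"
    and act_relator: "\<And>r s. r \<in> R \<Longrightarrow> r \<in> words_over S \<Longrightarrow> s \<in> U \<Longrightarrow> act r s = s"
    and "(u, v) \<in> pres_rel S R" "s \<in> U"
  shows "act u s = act v s"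
  using assms(5,6)
proof (induction arbitrary: s)
  case (cancel u v a b)
  then have "act [(a, b), (a, \<not> b)] (act v s) = act v s" using act_closed act_cancel by blast
  then show ?case by (simp only: act_append)
next
  case (relator r u v)
  then have "act r (act v s) = act v s" using act_closed act_relator by blast
  then show ?case by (simp only: act_append)
qed simp_all

definition subst_word :: "('g \<times> bool \<Rightarrow> 'h word) \<Rightarrow> 'g word \<Rightarrow> 'h word" where
  "subst_word f w = concat (map f w)"

lemma subst_word_Nil [simp]: "subst_word f [] = []"
  by (simp add: subst_word_def)

lemma subst_word_Cons [simp]: "subst_word f (x # w) = f x @ subst_word f w"
  by (simp add: subst_word_def)

lemma subst_word_append [simp]: "subst_word f (u @ v) = subst_word f u @ subst_word f v"
  by (simp add: subst_word_def)

definition subst_hom :: "'h set \<Rightarrow> 'h word set \<Rightarrow> ('g \<times> bool \<Rightarrow> 'h word) \<Rightarrow> 'g word set \<Rightarrow> 'h word set"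
  where "subst_hom T Q f A = pres_class T Q (subst_word f (SOME w. w \<in> A))"

locale presentation_subst =
  fixes S :: "'g set" and R :: "'g word set" and T :: "'h set" and Q :: "'h word set"
    and f :: "'g \<times> bool \<Rightarrow> 'h word"
  assumes subst_gen_words_over: "a \<in> S \<Longrightarrow> f (a, True) \<in> words_over T"
    and subst_gen_inv: "a \<in> S \<Longrightarrow> f (a, False) = word_inv (f (a, True))"
    and subst_relator: "r \<in> R \<Longrightarrow> r \<in> words_over S \<Longrightarrow> (subst_word f r, []) \<in> pres_rel T Q"
begin

lemma subst_letter_words_over: "fst x \<in> S \<Longrightarrow> f x \<in> words_over T"
  using subst_gen_words_over subst_gen_inv by (cases x; cases "snd x") auto

lemma subst_word_words_over: "w \<in> words_over S \<Longrightarrow> subst_word f w \<in> words_over T"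
  by (induction w) (simp_all add: subst_letter_words_over)

lemma subst_letter_inv: "a \<in> S \<Longrightarrow> f (a, \<not> b) = word_inv (f (a, b))"
  using subst_gen_inv by (cases b) auto

lemma pres_rel_subst_word:
  assumes "(u, v) \<in> pres_rel S R"
  shows "(subst_word f u, subst_word f v) \<in> pres_rel T Q"
  using assms
proof induction
  case (refl w)
  then show ?case by (intro pres_rel.refl subst_word_words_over)
next
  case (cancel u v a b)
  have "(f (a, b) @ f (a, \<not> b), []) \<in> pres_rel T Q"
    using cancel subst_letter_inv[of a b] subst_letter_words_over[of "(a, b)"]
      pres_rel_append_word_inv[of "f (a, b)" T Q]
    by simp
  then have "(subst_word f u @ (f (a, b) @ f (a, \<not> b)) @ subst_word f v,
      subst_word f u @ [] @ subst_word f v) \<in> pres_rel T Q"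
    by (rule pres_rel_context) (use cancel in \<open>simp_all add: subst_word_words_over\<close>)
  then show ?case by simp
next
  case (relator r u v)
  have "(subst_word f u @ subst_word f r @ subst_word f v, subst_word f u @ [] @ subst_word f v)
      \<in> pres_rel T Q"
    using relator by (intro pres_rel_context subst_relator subst_word_words_over)
  then show ?case by simp
qed (blast intro: pres_rel.sym pres_rel.trans)+

lemma subst_hom_pres_class:
  assumes "w \<in> words_over S"
  shows "subst_hom T Q f (pres_class S R w) = pres_class T Q (subst_word f w)"
proof -
  define w' where "w' = (SOME w'. w' \<in> pres_class S R w)"
  have "w' \<in> pres_class S R w"
    unfolding w'_def by (rule someI[of _ w]) (use assms in \<open>auto intro: pres_rel.refl\<close>)
  then have "(subst_word f w, subst_word f w') \<in> pres_rel T Q"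
    by (auto intro: pres_rel_subst_word)
  then have "pres_class T Q (subst_word f w) = pres_class T Q (subst_word f w')"
    using pres_class_eq_iff[OF subst_word_words_over[OF assms]] by blast
  then show ?thesis
    unfolding subst_hom_def w'_def[symmetric] by simp
qed

lemma subst_hom_hom: "subst_hom T Q f \<in> hom (presented_group S R) (presented_group T Q)"
proof (rule homI)
  fix x y
  assume "x \<in> carrier (presented_group S R)" "y \<in> carrier (presented_group S R)"
  then obtain u v where "u \<in> words_over S" "x = pres_class S R u" "v \<in> words_over S" "y = pres_class S R v"
    by (auto simp: presented_group_carrier)
  then show "subst_hom T Q f (x \<otimes>\<^bsub>presented_group S R\<^esub> y)
      = subst_hom T Q f x \<otimes>\<^bsub>presented_group T Q\<^esub> subst_hom T Q f y"
    by (simp add: presented_group_mult subst_hom_pres_class subst_word_words_over)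
qed (auto simp: presented_group_carrier subst_hom_pres_class subst_word_words_over)

lemma group_hom_subst_hom: "group_hom (presented_group S R) (presented_group T Q) (subst_hom T Q f)"
  by (simp add: group_hom_def group_hom_axioms_def group_presented_group subst_hom_hom)

lemma subst_hom_image:
  "subst_hom T Q f ` carrier (presented_group S R)
     = generate (presented_group T Q) ((\<lambda>a. pres_class T Q (f (a, True))) ` S)"
proof -
  have "subst_hom T Q f (pres_gen S R a) = pres_class T Q (f (a, True))" if "a \<in> S" for a
    using that subst_hom_pres_class[of "[(a, True)]"] by (simp add: pres_gen_def)
  then have gens: "subst_hom T Q f ` pres_gen S R ` S = (\<lambda>a. pres_class T Q (f (a, True))) ` S"
    unfolding image_comp by (intro image_cong) simp_all
  have "pres_gen S R ` S \<subseteq> carrier (presented_group S R)"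
    by (auto simp: pres_gen_def presented_group_carrier)
  then have "generate (presented_group T Q) (subst_hom T Q f ` pres_gen S R ` S)
      = subst_hom T Q f ` generate (presented_group S R) (pres_gen S R ` S)"
    by (rule group_hom.generate_img[OF group_hom_subst_hom])
  then show ?thesis
    by (simp only: gens presented_group_generate[symmetric])
qed

lemma subst_hom_iso_generate:
  assumes faithful: "\<And>w. w \<in> words_over S \<Longrightarrow> (subst_word f w, []) \<in> pres_rel T Q \<Longrightarrow>
      (w, []) \<in> pres_rel S R"
  shows "subst_hom T Q f \<in> iso (presented_group S R) ((presented_group T Q)
      \<lparr>carrier := generate (presented_group T Q) ((\<lambda>a. pres_class T Q (f (a, True))) ` S)\<rparr>)"
proof -
  have "x = \<one>\<^bsub>presented_group S R\<^esub>"
    if x: "x \<in> carrier (presented_group S R)" "subst_hom T Q f x = \<one>\<^bsub>presented_group T Q\<^esub>" for x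
  proof -
    obtain w where w: "w \<in> words_over S" "x = pres_class S R w"
      using x(1) by (auto simp: presented_group_carrier)
    then have "(subst_word f w, []) \<in> pres_rel T Q"
      using x(2) pres_class_eq_iff[OF subst_word_words_over[OF w(1)]]
      by (simp add: subst_hom_pres_class presented_group_one)
    then show ?thesis
      using faithful w pres_class_eq_iff[of w S R "[]"] by (simp add: presented_group_one)
  qed
  then have "kernel (presented_group S R) (presented_group T Q) (subst_hom T Q f)
      = {\<one>\<^bsub>presented_group S R\<^esub>}"
    using group_hom.hom_one[OF group_hom_subst_hom]
      monoid.one_closed[OF group.is_monoid[OF group_presented_group]]
    by (auto simp: kernel_def)
  then have "inj_on (subst_hom T Q f) (carrier (presented_group S R))"
    by (rule group_hom.trivial_ker_imp_inj[OF group_hom_subst_hom])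
  then show ?thesis
    using subst_hom_hom subst_hom_image by (auto simp: iso_iff hom_def)
qed

end

definition lambda12_word :: "nat word" where "lambda12_word = [(2, True), (0, True)]"
definition lambda23_word :: "nat word" where "lambda23_word = [(3, True), (1, True)]"
definition lambda13_word :: "nat word" where "lambda13_word = [(3, True)] @ lambda12_word @ [(3, True)]"
definition d123_word :: "nat word" where
  "d123_word = word_inv lambda23_word @ word_inv lambda12_word @ lambda23_word @ lambda13_word"
definition comm_word :: "'g word \<Rightarrow> 'g word \<Rightarrow> 'g word" where
  "comm_word g h = g @ h @ word_inv g @ word_inv h"
definition h0_word :: "nat word" where
  "h0_word = comm_word (lambda12_word @ lambda12_word)
    (comm_word (lambda23_word @ lambda23_word) (lambda13_word @ lambda13_word))"
definition h1_word :: "nat word" where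
  "h1_word = comm_word (lambda12_word @ lambda12_word)
    (comm_word d123_word (lambda13_word @ lambda13_word))"

lemma FVB3_gens_simps: "0 \<in> FVB3_gens" "Suc 0 \<in> FVB3_gens" "2 \<in> FVB3_gens" "3 \<in> FVB3_gens"
  by (auto simp: FVB3_gens_def)

lemmas FVB3_word_defs = comm_word_def lambda12_word_def lambda23_word_def lambda13_word_def
  d123_word_def

lemma h0_eq_pres_class: "h0 = pres_class FVB3_gens FVB3_rels h0_word"
  by (simp add: h0_def h0_word_def comm_def t12_def t23_def t13_def lambda12_def lambda23_def
      lambda13_def sigma1_def sigma2_def rho1_def rho2_def pres_gen_def FVB3_def
      presented_group_mult presented_group_inv FVB3_word_defs FVB3_gens_simps)

lemma h1_eq_pres_class: "h1 = pres_class FVB3_gens FVB3_rels h1_word"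
  by (simp add: h1_def h1_word_def comm_def t12_def t13_def d123_def lambda12_def lambda23_def
      lambda13_def sigma1_def sigma2_def rho1_def rho2_def pres_gen_def FVB3_def
      presented_group_mult presented_group_inv FVB3_word_defs FVB3_gens_simps)

lemma h0_word_words_over: "h0_word \<in> words_over FVB3_gens"
  by (simp add: h0_word_def FVB3_word_defs FVB3_gens_simps)

lemma h1_word_words_over: "h1_word \<in> words_over FVB3_gens"
  by (simp add: h1_word_def FVB3_word_defs FVB3_gens_simps)

section \<open>An action of FVB3 on the free group times six points\<close>

text \<open>With generator indices \<open>0, 1, 2, 3\<close> for \<open>\<sigma>\<^sub>1, \<sigma>\<^sub>2, \<rho>\<^sub>1, \<rho>\<^sub>2\<close>: the two involutions of
  \<open>fvb3_perm\<close> generate \<open>S\<^sub>3\<close> acting simply transitively on the points \<open>0..5\<close>, and \<open>fvb3_cocycle a s\<close>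
  is the letter of \<open>F\<^sub>2\<close> by which generator \<open>a\<close> multiplies at the point \<open>s\<close>.\<close>

definition fvb3_perm :: "nat \<Rightarrow> nat \<Rightarrow> nat" where
  "fvb3_perm a s = (if a \<in> {0, 2} then [2, 4, 0, 5, 1, 3] ! s else [1, 0, 3, 2, 5, 4] ! s)"

definition fvb3_cocycle :: "nat \<Rightarrow> nat \<Rightarrow> nat word" where
  "fvb3_cocycle a s =
    (if a = 0 then [[(0, True)], [(1, True)], [(0, False)], [(0, True)], [(1, False)], [(0, False)]] ! s
     else if a = 1 then [[(0, True)], [(0, False)], [(1, True)], [(1, False)], [(0, True)], [(0, False)]] ! s
     else [])"

fun fvb3_perm_word :: "nat word \<Rightarrow> nat \<Rightarrow> nat" where
  "fvb3_perm_word [] s = s"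
| "fvb3_perm_word (x # w) s = fvb3_perm (fst x) (fvb3_perm_word w s)"

fun fvb3_cocycle_word :: "nat word \<Rightarrow> nat \<Rightarrow> nat word" where
  "fvb3_cocycle_word [] s = []"
| "fvb3_cocycle_word (x # w) s = fvb3_cocycle (fst x) (fvb3_perm_word w s) @ fvb3_cocycle_word w s"

definition fvb3_act :: "nat word \<Rightarrow> nat word \<times> nat \<Rightarrow> nat word \<times> nat" where
  "fvb3_act w rs = (mult_word (fvb3_cocycle_word w (snd rs)) (fst rs), fvb3_perm_word w (snd rs))"

lemma fvb3_perm_word_append: "fvb3_perm_word (u @ v) s = fvb3_perm_word u (fvb3_perm_word v s)"
  by (induction u) auto

lemma fvb3_cocycle_word_append:
  "fvb3_cocycle_word (u @ v) s = fvb3_cocycle_word u (fvb3_perm_word v s) @ fvb3_cocycle_word v s"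
  by (induction u) (auto simp: fvb3_perm_word_append)

lemma fvb3_act_append: "fvb3_act (u @ v) rs = fvb3_act u (fvb3_act v rs)"
  by (simp add: fvb3_act_def fvb3_cocycle_word_append fvb3_perm_word_append mult_word_append)

lemma less_6_cases: "(s::nat) < 6 \<Longrightarrow> s = 0 \<or> s = 1 \<or> s = 2 \<or> s = 3 \<or> s = 4 \<or> s = 5"
  by auto

lemma fvb3_gen_act:
  assumes "a \<in> FVB3_gens" "s < 6"
  shows "fvb3_perm a s < 6" "fvb3_perm a (fvb3_perm a s) = s"
    "mult_word (fvb3_cocycle a (fvb3_perm a s) @ fvb3_cocycle a s) [] = []"
proof -
  have "a = 0 \<or> a = 1 \<or> a = 2 \<or> a = 3" using assms by (auto simp: FVB3_gens_def)
  then show "fvb3_perm a s < 6" "fvb3_perm a (fvb3_perm a s) = s"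
    "mult_word (fvb3_cocycle a (fvb3_perm a s) @ fvb3_cocycle a s) [] = []"
    using less_6_cases[OF assms(2)]
    by (auto simp: fvb3_perm_def fvb3_cocycle_def mult_letter_def)
qed

lemma fvb3_perm_word_less: "w \<in> words_over FVB3_gens \<Longrightarrow> s < 6 \<Longrightarrow> fvb3_perm_word w s < 6"
  by (induction w) (auto simp: fvb3_gen_act)

lemma fvb3_relator_act:
  assumes "r \<in> FVB3_rels" "s < 6"
  shows "fvb3_perm_word r s = s \<and> mult_word (fvb3_cocycle_word r s) [] = []"
  using assms less_6_cases[OF assms(2)]
  by (auto simp: FVB3_rels_def word_inv_def fvb3_perm_def fvb3_cocycle_def mult_letter_def)

lemma fvb3_act_pres_rel:
  assumes "(u, v) \<in> pres_rel FVB3_gens FVB3_rels" "reduced r" "s < 6"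
  shows "fvb3_act u (r, s) = fvb3_act v (r, s)"
proof (rule pres_rel_act_eq[where U = "{(r, s). reduced r \<and> s < 6}"])
  show "fvb3_act w rs \<in> {(r, s). reduced r \<and> s < 6}"
    if "w \<in> words_over FVB3_gens" "rs \<in> {(r, s). reduced r \<and> s < 6}" for w rs
    using that by (auto simp: fvb3_act_def reduced_mult_word fvb3_perm_word_less)
  show "fvb3_act [(a, b), (a, \<not> b)] rs = rs"
    if "a \<in> FVB3_gens" "rs \<in> {(r, s). reduced r \<and> s < 6}" for a b rs
    using that fvb3_gen_act[of a "snd rs"] mult_word_trivial[of _ "fst rs"]
    by (auto simp: fvb3_act_def)
  show "fvb3_act rel rs = rs"
    if "rel \<in> FVB3_rels" "rs \<in> {(r, s). reduced r \<and> s < 6}" for rel rs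
    using that fvb3_relator_act[of rel "snd rs"] mult_word_trivial[of _ "fst rs"]
    by (auto simp: fvb3_act_def)
qed (use assms in \<open>simp_all add: fvb3_act_append\<close>)

section \<open>Ping-pong\<close>

definition h_word :: "nat \<times> bool \<Rightarrow> nat word" where
  "h_word x = (let h = (if fst x = 0 then h0_word else h1_word) in if snd x then h else word_inv h)"

interpretation h_subst: presentation_subst "{0, 1}" "{}" FVB3_gens FVB3_rels h_word
  by unfold_locales (auto simp: h_word_def h0_word_words_over h1_word_words_over)

text \<open>The letters \<open>(0, b)\<close> and \<open>(1, b)\<close> of \<open>F\<^sub>2\<close> stand for \<open>h\<^sub>0\<^sup>\<plusminus>\<^sup>1\<close> and \<open>h\<^sub>1\<^sup>\<plusminus>\<^sup>1\<close>;
  \<open>pingpong_word\<close> is the \<open>F\<^sub>2\<close>-coordinate of their action at the fixed point \<open>0\<close>.\<close>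

definition pingpong_prefix :: "nat \<times> bool \<Rightarrow> nat word" where
  "pingpong_prefix x =
    (if fst x = 0 then (if snd x then [(0, True), (0, True), (0, True), (0, True)]
                        else [(0, True), (0, True), (1, True), (1, True)])
     else (if snd x then [(0, True), (1, True), (1, True)] else [(0, False)]))"

definition pingpong_word :: "nat \<times> bool \<Rightarrow> nat word" where
  "pingpong_word x =
    (if fst x = 0 then (if snd x then
       [(0, True), (0, True), (0, True), (0, True), (1, True), (1, True), (0, False), (0, False),
        (1, False), (1, False), (0, False), (0, False), (1, True), (1, True), (0, True), (0, True),
        (1, False), (1, False), (0, False), (0, False)]
     else
       [(0, True), (0, True), (1, True), (1, True), (0, False), (0, False), (1, False), (1, False),
        (0, True), (0, True), (1, True), (1, True), (0, True), (0, True), (1, False), (1, False),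
        (0, False), (0, False), (0, False), (0, False)])
     else (if snd x then
       [(0, True), (1, True), (1, True), (0, True), (1, False), (1, False), (0, False), (0, False),
        (1, True), (1, True), (0, False), (1, False), (1, False), (0, True)]
     else
       [(0, False), (1, True), (1, True), (0, True), (1, False), (1, False), (0, True), (0, True),
        (1, True), (1, True), (0, False), (1, False), (1, False), (0, False)]))"

lemma letter_cases:
  "fst (x::nat \<times> bool) \<in> {0, 1} \<Longrightarrow> x = (0, True) \<or> x = (0, False) \<or> x = (1, True) \<or> x = (1, False)"
  by (cases x) auto

lemmas pingpong_compute_simps = FVB3_word_defs fvb3_perm_def fvb3_cocycle_def pingpong_word_def
  mult_letter_Nil mult_letter_Cons

lemma fvb3_act_h0_word:
  "fvb3_perm_word h0_word 0 = 0 \<and> mult_word (fvb3_cocycle_word h0_word 0) [] = pingpong_word (0, True)"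
  by (simp add: h0_word_def pingpong_compute_simps)

lemma fvb3_act_h0_word_inv:
  "fvb3_perm_word (word_inv h0_word) 0 = 0 \<and>
    mult_word (fvb3_cocycle_word (word_inv h0_word) 0) [] = pingpong_word (0, False)"
  by (simp add: h0_word_def pingpong_compute_simps)

lemma fvb3_act_h1_word:
  "fvb3_perm_word h1_word 0 = 0 \<and> mult_word (fvb3_cocycle_word h1_word 0) [] = pingpong_word (1, True)"
  by (simp add: h1_word_def pingpong_compute_simps)

lemma fvb3_act_h1_word_inv:
  "fvb3_perm_word (word_inv h1_word) 0 = 0 \<and>
    mult_word (fvb3_cocycle_word (word_inv h1_word) 0) [] = pingpong_word (1, False)"
  by (simp add: h1_word_def pingpong_compute_simps)

lemma fvb3_act_h_word:
  assumes "fst x \<in> {0, 1}" "reduced r"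
  shows "fvb3_act (h_word x) (r, 0) = (mult_word (pingpong_word x) r, 0)"
proof -
  have "fvb3_perm_word (h_word x) 0 = 0 \<and>
      mult_word (fvb3_cocycle_word (h_word x) 0) [] = pingpong_word x"
    using letter_cases[OF assms(1)] fvb3_act_h0_word fvb3_act_h0_word_inv fvb3_act_h1_word
      fvb3_act_h1_word_inv
    by (auto simp: h_word_def)
  then show ?thesis
    using mult_word_eq_mult_reduced[OF assms(2), of "fvb3_cocycle_word (h_word x) 0"]
    by (simp add: fvb3_act_def)
qed

lemma pingpong_prefix_of_word:
  assumes "fst x \<in> {0, 1}"
  shows "pingpong_prefix x \<noteq> []"
    "take (length (pingpong_prefix x)) (pingpong_word x) = pingpong_prefix x"
  using letter_cases[OF assms] by (auto simp: pingpong_prefix_def pingpong_word_def)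

lemma pingpong_word_reduced: "fst x \<in> {0, 1} \<Longrightarrow> reduced (pingpong_word x)"
  using letter_cases[of x] by (auto simp: pingpong_word_def)

lemma pingpong_word_prefix:
  assumes "fst x \<in> {0, 1}" "fst y \<in> {0, 1}" "y \<noteq> (fst x, \<not> snd x)"
  defines "q \<equiv> mult_word (pingpong_word x @ pingpong_prefix y) []"
  shows "q \<noteq> []" "take (length (pingpong_prefix x)) q = pingpong_prefix x"
    "last q = last (pingpong_prefix y)"
  using letter_cases[OF assms(1)] letter_cases[OF assms(2)] assms(3) unfolding q_def
  by (auto simp: pingpong_prefix_def pingpong_word_def mult_letter_Nil mult_letter_Cons)

lemma pingpong:
  assumes "reduced (x # w)" "fst ` set (x # w) \<subseteq> {0, 1}"
  shows "\<exists>r. fvb3_act (subst_word h_word (x # w)) ([], 0) = (pingpong_prefix x @ r, 0) \<and>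
    reduced (pingpong_prefix x @ r)"
  using assms
proof (induction w arbitrary: x)
  case Nil
  then have x: "fst x \<in> {0, 1}" by simp
  have "fvb3_act (subst_word h_word [x]) ([], 0) = (pingpong_word x, 0)"
    using fvb3_act_h_word[OF x] mult_word_reduced_append[of "pingpong_word x" "[]"]
      pingpong_word_reduced[OF x]
    by simp
  then show ?case
    using pingpong_prefix_of_word[OF x] pingpong_word_reduced[OF x]
    by (metis append_take_drop_id)
next
  case (Cons y w)
  then have x: "fst x \<in> {0, 1}" and y: "fst y \<in> {0, 1}" and "y \<noteq> (fst x, \<not> snd x)"
    by auto
  obtain r where r: "fvb3_act (subst_word h_word (y # w)) ([], 0) = (pingpong_prefix y @ r, 0)"
      "reduced (pingpong_prefix y @ r)"
    using Cons.IH[of y] Cons.prems reduced_Cons_tl by auto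
  have "fvb3_act (subst_word h_word (x # y # w)) ([], 0)
      = (mult_word (pingpong_word x) (pingpong_prefix y @ r), 0)"
    using r fvb3_act_h_word[OF x r(2)] by (simp add: fvb3_act_append)
  moreover obtain r' where "mult_word (pingpong_word x) (pingpong_prefix y @ r) = pingpong_prefix x @ r'"
    using mult_word_prefix pingpong_prefix_of_word(1)[OF y] r(2)
      pingpong_word_prefix[OF x y \<open>y \<noteq> (fst x, \<not> snd x)\<close>] by blast
  ultimately show ?case using reduced_mult_word[OF r(2)] by metis
qed

lemma subst_h_word_faithful:
  assumes w: "w \<in> words_over {0, 1}"
    and "(subst_word h_word w, []) \<in> pres_rel FVB3_gens FVB3_rels"
  shows "(w, []) \<in> pres_rel {0, 1} {}"
proof -
  define v where "v = mult_word w []"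
  have wv: "(w, v) \<in> pres_rel {0, 1} {}" unfolding v_def by (rule pres_rel_mult_word[OF w])
  have "(subst_word h_word v, []) \<in> pres_rel FVB3_gens FVB3_rels"
    using h_subst.pres_rel_subst_word[OF wv] assms(2) by (blast intro: pres_rel.sym pres_rel.trans)
  then have act: "fvb3_act (subst_word h_word v) ([], 0) = ([], 0)"
    using fvb3_act_pres_rel[of "subst_word h_word v" "[]" "[]" 0] by (simp add: fvb3_act_def)
  have "v = []"
  proof (rule ccontr)
    assume "v \<noteq> []"
    then obtain x v' where xv: "v = x # v'" by (cases v) auto
    have "reduced v" unfolding v_def by (rule reduced_mult_word) simp
    moreover have "fst ` set v \<subseteq> {0, 1}"
    proof -
      have "fst ` set v \<subseteq> fst ` set w" using set_mult_word[of w "[]"] unfolding v_def by auto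
      then show ?thesis using w unfolding words_over_def by simp
    qed
    ultimately obtain r where "fvb3_act (subst_word h_word v) ([], 0) = (pingpong_prefix x @ r, 0)"
      using pingpong xv by blast
    moreover have "fst x \<in> {0, 1}" using \<open>fst ` set v \<subseteq> {0, 1}\<close> xv by auto
    ultimately show False using act pingpong_prefix_of_word(1) by fastforce
  qed
  then show ?thesis using wv by simp
qed

theorem mainTheorem8:
  shows "FVB3\<lparr>carrier := generate FVB3 {h0, h1}\<rparr> \<cong> free_group2"
proof -
  have gens: "(\<lambda>a. pres_class FVB3_gens FVB3_rels (h_word (a, True))) ` {0, 1} = {h0, h1}"
    by (simp add: h_word_def h0_eq_pres_class h1_eq_pres_class)
  have "free_group2 \<cong> FVB3\<lparr>carrier := generate FVB3 {h0, h1}\<rparr>"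
    using h_subst.subst_hom_iso_generate[OF subst_h_word_faithful] gens
    unfolding free_group2_def FVB3_def by (intro is_isoI) simp
  then show ?thesis
    using group.iso_sym[OF group_presented_group] unfolding free_group2_def by blast
qed

end
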